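(* Let $f$ be a ternary cubic form with $f_{333}\neq0$, $\Delta_{333}\neq0$ and $f_{133}=f_{233}=0$. Then $f$ is completely reducible (a product of three linear forms) if and only if $$f_{113}(4f_{113}f_{223}-f_{123}^2)+3(f_{112}^2-3f_{111}f_{122})f_{333}=0,$$ $$f_{123}(4f_{113}f_{223}-f_{123}^2)+3(f_{112}f_{122}-9f_{111}f_{222})f_{333}=0,$$ $$f_{223}(4f_{113}f_{223}-f_{123}^2)+3(f_{122}^2-3f_{112}f_{222})f_{333}=0.$$
   Context: A ternary cubic form is written $f=\sum_{1\le i\le j\le k\le3}f_{ijk}x_ix_jx_k$ with complex coefficients; $\Delta_{ijk}$ denotes the coefficient of $x_ix_jx_k$ in the Hessian $\Delta=\tfrac12\det(\partial^2f/\partial x_i\partial x_j)$. *)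

theory Defs
  imports "HOL-Computational_Algebra.Polynomial"
begin

text \<open>Polynomials in three variables x1, x2, x3 over the complex numbers are
  represented as iterated univariate polynomials: x3 is the outermost
  variable, x1 the innermost.\<close>

type_synonym poly3 = "complex poly poly poly"

definition var3 :: "nat \<Rightarrow> poly3" where
  "var3 i = (if i = 1 then [:[:[:0, 1:]:]:]
             else if i = 2 then [:[:0, 1:]:]
             else [:0, 1:])"

definition const3 :: "complex \<Rightarrow> poly3" where
  "const3 a = [:[:[:a:]:]:]"

definition mcoeff :: "poly3 \<Rightarrow> nat \<Rightarrow> nat \<Rightarrow> nat \<Rightarrow> complex" where
  "mcoeff p a b c = coeff (coeff (coeff p c) b) a"

definition pdiff3 :: "nat \<Rightarrow> poly3 \<Rightarrow> poly3" where
  "pdiff3 i p = (if i = 1 then map_poly (map_poly pderiv) p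
                 else if i = 2 then map_poly pderiv p
                 else pderiv p)"

definition cubic :: "(nat \<Rightarrow> nat \<Rightarrow> nat \<Rightarrow> complex) \<Rightarrow> poly3" where
  "cubic f = (\<Sum>i\<in>{1..3}. \<Sum>j\<in>{i..3}. \<Sum>k\<in>{j..3}.
                const3 (f i j k) * var3 i * var3 j * var3 k)"

definition det3 :: "(nat \<Rightarrow> nat \<Rightarrow> 'a::comm_ring_1) \<Rightarrow> 'a" where
  "det3 M = M 1 1 * M 2 2 * M 3 3 + M 1 2 * M 2 3 * M 3 1 + M 1 3 * M 2 1 * M 3 2
          - M 1 3 * M 2 2 * M 3 1 - M 1 2 * M 2 1 * M 3 3 - M 1 1 * M 2 3 * M 3 2"

definition hessian :: "poly3 \<Rightarrow> poly3" where
  "hessian p = const3 (1/2) * det3 (\<lambda>i j. pdiff3 i (pdiff3 j p))"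

definition cf3 :: "poly3 \<Rightarrow> nat \<Rightarrow> nat \<Rightarrow> nat \<Rightarrow> complex" where
  "cf3 p i j k = mcoeff p (length (filter (\<lambda>t. t = 1) [i,j,k]))
                          (length (filter (\<lambda>t. t = 2) [i,j,k]))
                          (length (filter (\<lambda>t. t = 3) [i,j,k]))"

definition linear_form :: "complex \<Rightarrow> complex \<Rightarrow> complex \<Rightarrow> poly3" where
  "linear_form a b c = const3 a * var3 1 + const3 b * var3 2 + const3 c * var3 3"

definition completely_reducible :: "poly3 \<Rightarrow> bool" where
  "completely_reducible p \<longleftrightarrow>
     (\<exists>a1 b1 c1 a2 b2 c2 a3 b3 c3.
        p = linear_form a1 b1 c1 * linear_form a2 b2 c2 * linear_form a3 b3 c3)"

end

theory Submission
  imports Defs "HOL-Computational_Algebra.Fundamental_Theorem_Algebra"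
begin

text \<open>Write the cubic in x = x1, y = x2, z = x3 as a z^3 + z Q(x, y) + g(x, y); it has no
  z^2-terms. Since Delta_333 = 3 a (4 p r - q^2), the form Q = p x^2 + q x y + r y^2 is
  nondegenerate, so Q = -a X Y for independent linear forms X, Y. The three conditions say that
  the quadratic covariant (4 p r - q^2) Q - 3/4 a Hess(g) vanishes. It transforms with the square
  of the determinant, so in the coordinates X, Y it forces g = s X^3 + v Y^3 with 27 s v = a^2.
  Then, with U = l X, V = k Y, a l^3 = s and 3 l k = 1, the cubic is
  a (z^3 + U^3 + V^3 - 3 z U V) = a (z + U + V) (z + w U + w^2 V) (z + w^2 U + w V), w a primitive
  cube root of unity. Conversely, for a product of linear forms a_i x + b_i y + c_i z the missing
  z^2-terms say that the a_i / c_i and the b_i / c_i sum to zero, after which the three conditions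
  are polynomial identities.\<close>

text \<open>(p, q, r) and (s, t, u, v) are the coefficients of p x^2 + q x y + r y^2 and
  s x^3 + t x^2 y + u x y^2 + v y^3; the substitutions give those of the form composed with
  (x, y) \<mapsto> (m1 x + n1 y, m2 x + n2 y).\<close>

fun quadratic_subst :: "'a::comm_ring_1 \<Rightarrow> 'a \<Rightarrow> 'a \<Rightarrow> 'a \<Rightarrow> 'a \<times> 'a \<times> 'a \<Rightarrow> 'a \<times> 'a \<times> 'a" where
  "quadratic_subst m1 n1 m2 n2 (p, q, r) =
     (p*m1^2 + q*m1*m2 + r*m2^2,
      2*p*m1*n1 + q*(m1*n2 + n1*m2) + 2*r*m2*n2,
      p*n1^2 + q*n1*n2 + r*n2^2)"

fun cubic_subst :: "'a::comm_ring_1 \<Rightarrow> 'a \<Rightarrow> 'a \<Rightarrow> 'a \<Rightarrow> 'a \<times> 'a \<times> 'a \<times> 'a \<Rightarrow> 'a \<times> 'a \<times> 'a \<times> 'a" where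
  "cubic_subst m1 n1 m2 n2 (s, t, u, v) =
     (s*m1^3 + t*m1^2*m2 + u*m1*m2^2 + v*m2^3,
      3*s*m1^2*n1 + t*(m1^2*n2 + 2*m1*n1*m2) + u*(n1*m2^2 + 2*m1*m2*n2) + 3*v*m2^2*n2,
      3*s*m1*n1^2 + t*(n1^2*m2 + 2*m1*n1*n2) + u*(m1*n2^2 + 2*n1*m2*n2) + 3*v*m2*n2^2,
      s*n1^3 + t*n1^2*n2 + u*n1*n2^2 + v*n2^3)"

fun reducibility_covariant :: "'a::comm_ring_1 \<Rightarrow> 'a \<times> 'a \<times> 'a \<Rightarrow> 'a \<times> 'a \<times> 'a \<times> 'a \<Rightarrow> 'a \<times> 'a \<times> 'a" where
  "reducibility_covariant a (p, q, r) (s, t, u, v) =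
     (p * (4*p*r - q^2) + 3*(t^2 - 3*s*u)*a,
      q * (4*p*r - q^2) + 3*(t*u - 9*s*v)*a,
      r * (4*p*r - q^2) + 3*(u^2 - 3*t*v)*a)"

text \<open>a z^3 + z Q(x, y) + g(x, y) is the product of the linear forms a_i x + b_i y + c_i z
  (whose z^2-coefficients must then vanish).\<close>

fun splits_into_linear_forms :: "'a::comm_ring_1 \<Rightarrow> 'a \<times> 'a \<times> 'a \<Rightarrow> 'a \<times> 'a \<times> 'a \<times> 'a \<Rightarrow> bool" where
  "splits_into_linear_forms a (p, q, r) (s, t, u, v) \<longleftrightarrow>
     (\<exists>a1 b1 c1 a2 b2 c2 a3 b3 c3.
        s = a1*a2*a3 \<and> t = a1*a2*b3 + a1*b2*a3 + b1*a2*a3 \<and>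
        u = a1*b2*b3 + b1*a2*b3 + b1*b2*a3 \<and> v = b1*b2*b3 \<and>
        p = a1*a2*c3 + a1*c2*a3 + c1*a2*a3 \<and>
        q = a1*b2*c3 + a1*c2*b3 + b1*a2*c3 + b1*c2*a3 + c1*a2*b3 + c1*b2*a3 \<and>
        r = b1*b2*c3 + b1*c2*b3 + c1*b2*b3 \<and>
        a1*c2*c3 + c1*a2*c3 + c1*c2*a3 = 0 \<and> b1*c2*c3 + c1*b2*c3 + c1*c2*b3 = 0 \<and>
        a = c1*c2*c3)"

fun quadratic_discriminant :: "'a::comm_ring_1 \<times> 'a \<times> 'a \<Rightarrow> 'a" where
  "quadratic_discriminant (p, q, r) = q^2 - 4*p*r"

lemma quadratic_discriminant_subst:
  "quadratic_discriminant (quadratic_subst m1 n1 m2 n2 Q) = (m1*n2 - n1*m2)^2 * quadratic_discriminant Q"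
  by (cases Q) (simp add: power2_eq_square algebra_simps)

lemma quadratic_subst_eq_0_iff:
  fixes m1 :: "'a::idom"
  assumes "m1*n2 - n1*m2 \<noteq> 0"
  shows "quadratic_subst m1 n1 m2 n2 (p, q, r) = (0, 0, 0) \<longleftrightarrow> (p, q, r) = (0, 0, 0)"
proof
  assume "quadratic_subst m1 n1 m2 n2 (p, q, r) = (0, 0, 0)"
  then have "m1*m1*p + m1*m2*q + m2*m2*r = 0" "2*m1*n1*p + (m1*n2 + n1*m2)*q + 2*m2*n2*r = 0"
    "n1*n1*p + n1*n2*q + n2*n2*r = 0"
    by (simp_all add: algebra_simps power2_eq_square)
  then have "(m1*n2 - n1*m2)^3 * p = 0" "(m1*n2 - n1*m2)^3 * q = 0" "(m1*n2 - n1*m2)^3 * r = 0"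
    by algebra+
  with assms show "(p, q, r) = (0, 0, 0)" by simp
qed simp

lemma reducibility_covariant_subst_eq_0_iff:
  fixes m1 :: "'a::idom"
  assumes "m1*n2 - n1*m2 \<noteq> 0"
  shows "reducibility_covariant a (quadratic_subst m1 n1 m2 n2 Q) (cubic_subst m1 n1 m2 n2 g) = (0, 0, 0)
    \<longleftrightarrow> reducibility_covariant a Q g = (0, 0, 0)"
proof -
  let ?scale = "(*) ((m1*n2 - n1*m2)^2)"
  obtain p q r s t u v where Qg: "Q = (p, q, r)" "g = (s, t, u, v)"
    by (cases Q; cases g)
  have covariance:
    "reducibility_covariant a (quadratic_subst m1 n1 m2 n2 Q) (cubic_subst m1 n1 m2 n2 g) =
     map_prod ?scale (map_prod ?scale ?scale) (quadratic_subst m1 n1 m2 n2 (reducibility_covariant a Q g))"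
    unfolding Qg quadratic_subst.simps cubic_subst.simps reducibility_covariant.simps map_prod_simp
      prod.inject
    by (intro conjI; algebra)
  moreover obtain x y z where "reducibility_covariant a Q g = (x, y, z)"
    by (metis prod.exhaust)
  ultimately show ?thesis
    using assms quadratic_subst_eq_0_iff[OF assms, of x y z]
    by (cases "quadratic_subst m1 n1 m2 n2 (x, y, z)") auto
qed

lemma cubic_subst_compose:
  "cubic_subst m1 n1 m2 n2 (cubic_subst k1 l1 k2 l2 g) =
   cubic_subst (k1*m1 + l1*m2) (k1*n1 + l1*n2) (k2*m1 + l2*m2) (k2*n1 + l2*n2) g"
  by (cases g) (simp add: algebra_simps power2_eq_square power3_eq_cube)

lemma cubic_subst_surj:
  fixes m1 :: "'a::field"
  assumes "m1*n2 - n1*m2 \<noteq> 0"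
  shows "\<exists>g'. cubic_subst m1 n1 m2 n2 g' = g"
proof -
  define d where "d = m1*n2 - n1*m2"
  have "cubic_subst m1 n1 m2 n2 (cubic_subst (n2/d) (-n1/d) (-m2/d) (m1/d) g) = cubic_subst 1 0 0 1 g"
    unfolding cubic_subst_compose using assms
    by (simp add: d_def diff_divide_distrib[symmetric] mult.commute)
  also have "\<dots> = g"
    by (cases g) simp
  finally show ?thesis ..
qed

lemma splits_into_linear_forms_subst:
  assumes "splits_into_linear_forms a Q g"
  shows "splits_into_linear_forms a (quadratic_subst m1 n1 m2 n2 Q) (cubic_subst m1 n1 m2 n2 g)"
proof -
  obtain p q r s t u v where [simp]: "Q = (p, q, r)" "g = (s, t, u, v)"
    by (cases Q; cases g)
  obtain a1 b1 c1 a2 b2 c2 a3 b3 c3 where coeffs: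
      "s = a1*a2*a3" "t = a1*a2*b3 + a1*b2*a3 + b1*a2*a3"
      "u = a1*b2*b3 + b1*a2*b3 + b1*b2*a3" "v = b1*b2*b3"
      "p = a1*a2*c3 + a1*c2*a3 + c1*a2*a3"
      "q = a1*b2*c3 + a1*c2*b3 + b1*a2*c3 + b1*c2*a3 + c1*a2*b3 + c1*b2*a3"
      "r = b1*b2*c3 + b1*c2*b3 + c1*b2*b3"
      "a1*c2*c3 + c1*a2*c3 + c1*c2*a3 = 0" "b1*c2*c3 + c1*b2*c3 + c1*c2*b3 = 0"
      "a = c1*c2*c3"
    using assms by auto
  define a1' a2' a3' b1' b2' b3' where
    "a1' = a1*m1 + b1*m2" "a2' = a2*m1 + b2*m2" "a3' = a3*m1 + b3*m2"
    "b1' = a1*n1 + b1*n2" "b2' = a2*n1 + b2*n2" "b3' = a3*n1 + b3*n2"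
  have "a1'*c2*c3 + c1*a2'*c3 + c1*c2*a3' =
      m1*(a1*c2*c3 + c1*a2*c3 + c1*c2*a3) + m2*(b1*c2*c3 + c1*b2*c3 + c1*c2*b3)"
       "b1'*c2*c3 + c1*b2'*c3 + c1*c2*b3' =
      n1*(a1*c2*c3 + c1*a2*c3 + c1*c2*a3) + n2*(b1*c2*c3 + c1*b2*c3 + c1*c2*b3)"
    unfolding a1'_a2'_a3'_b1'_b2'_b3'_def by (simp_all add: algebra_simps)
  then have "a1'*c2*c3 + c1*a2'*c3 + c1*c2*a3' = 0" "b1'*c2*c3 + c1*b2'*c3 + c1*c2*b3' = 0"
    using coeffs by simp_all
  moreover have "cubic_subst m1 n1 m2 n2 g =
      (a1'*a2'*a3', a1'*a2'*b3' + a1'*b2'*a3' + b1'*a2'*a3',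
       a1'*b2'*b3' + b1'*a2'*b3' + b1'*b2'*a3', b1'*b2'*b3')"
    unfolding a1'_a2'_a3'_b1'_b2'_b3'_def using coeffs
    by (simp add: algebra_simps power2_eq_square power3_eq_cube)
  moreover have "quadratic_subst m1 n1 m2 n2 Q =
      (a1'*a2'*c3 + a1'*c2*a3' + c1*a2'*a3',
       a1'*b2'*c3 + a1'*c2*b3' + b1'*a2'*c3 + b1'*c2*a3' + c1*a2'*b3' + c1*b2'*a3',
       b1'*b2'*c3 + b1'*c2*b3' + c1*b2'*b3')"
    unfolding a1'_a2'_a3'_b1'_b2'_b3'_def using coeffs
    by (simp add: algebra_simps power2_eq_square)
  ultimately show ?thesis
    using coeffs(10) by fastforce
qed

lemma splits_imp_reducibility_covariant_eq_0:
  fixes a :: "'a::field"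
  assumes "a \<noteq> 0" and "splits_into_linear_forms a Q g"
  shows "reducibility_covariant a Q g = (0, 0, 0)"
proof -
  obtain p q r s t u v where Qg: "Q = (p, q, r)" "g = (s, t, u, v)"
    by (cases Q; cases g)
  obtain a1 b1 c1 a2 b2 c2 a3 b3 c3 where coeffs:
      "s = a1*a2*a3" "t = a1*a2*b3 + a1*b2*a3 + b1*a2*a3"
      "u = a1*b2*b3 + b1*a2*b3 + b1*b2*a3" "v = b1*b2*b3"
      "p = a1*a2*c3 + a1*c2*a3 + c1*a2*a3"
      "q = a1*b2*c3 + a1*c2*b3 + b1*a2*c3 + b1*c2*a3 + c1*a2*b3 + c1*b2*a3"
      "r = b1*b2*c3 + b1*c2*b3 + c1*b2*b3"
      "a1*c2*c3 + c1*a2*c3 + c1*c2*a3 = 0" "b1*c2*c3 + c1*b2*c3 + c1*c2*b3 = 0"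
      "a = c1*c2*c3"
    using assms(2) unfolding Qg by auto
  have c: "c1 \<noteq> 0" "c2 \<noteq> 0" "c3 \<noteq> 0"
    using assms(1) coeffs(10) by auto
  define x1 x2 x3 y1 y2 y3 where
    "x1 = a1/c1" "x2 = a2/c2" "x3 = a3/c3" "y1 = b1/c1" "y2 = b2/c2" "y3 = b3/c3"
  have ab: "a1 = x1*c1" "a2 = x2*c2" "a3 = x3*c3" "b1 = y1*c1" "b2 = y2*c2" "b3 = y3*c3"
    using c by (simp_all add: x1_x2_x3_y1_y2_y3_def)
  have "a*(x1 + x2 + x3) = 0" "a*(y1 + y2 + y3) = 0"
    using coeffs(8,9) unfolding coeffs(10) ab by (simp_all add: algebra_simps)
  then have "x1 + x2 + x3 = 0" "y1 + y2 + y3 = 0"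
    using assms(1) by simp_all
  then have x3y3: "x3 = -x1 - x2" "y3 = -y1 - y2"
    by algebra+
  show ?thesis
    unfolding Qg coeffs ab x3y3 by (simp; intro conjI; algebra)
qed

lemma binary_quadratic_factors:
  fixes p :: "'a::alg_closed_field"
  shows "\<exists>m1 n1 m2 n2. quadratic_subst m1 n1 m2 n2 (0, 1, 0) = (p, q, r)"
proof (cases "p = 0")
  case True
  then have "quadratic_subst 0 1 q r (0, 1, 0) = (p, q, r)"
    by simp
  then show ?thesis by blast
next
  case False
  then obtain n1 where "poly [:r, -q, p:] n1 = 0"
    using alg_closed_imp_poly_has_root[of "[:r, -q, p:]"] by auto
  then have "quadratic_subst 1 n1 p (q - p*n1) (0, 1, 0) = (p, q, r)"
    by (simp add: algebra_simps power2_eq_square)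
  then show ?thesis by blast
qed

lemma reducibility_covariant_normal_form:
  fixes a :: "'a::field_char_0"
  assumes "a \<noteq> 0" and "reducibility_covariant a (0, -a, 0) (s, t, u, v) = (0, 0, 0)"
  shows "t = 0 \<and> u = 0 \<and> 27*s*v = a^2"
proof -
  have t2: "t^2 = 3*s*u" and u2: "u^2 = 3*t*v" and tu: "3*(t*u - 9*s*v) = -(a^2)"
    using assms by (auto simp: power2_eq_square algebra_simps) algebra
  have "t*u*(t*u - 9*s*v) = 0"
    using t2 u2 by algebra
  with tu assms have "t*u = 0"
    by auto
  with t2 u2 have "t = 0" "u = 0"
    by auto
  with tu show ?thesis
    by (simp add: mult.assoc)
qed

lemma splits_into_linear_forms_normal_form:
  fixes a :: "'a::{alg_closed_field, field_char_0}"
  assumes "a \<noteq> 0" and "27*s*v = a^2"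
  shows "splits_into_linear_forms a (0, -a, 0) (s, 0, 0, v)"
proof -
  obtain l where l: "l^3 = s/a"
    using nth_root_exists[of 3] by auto
  have "s \<noteq> 0"
    using assms by auto
  with l assms have "l \<noteq> 0" and al: "a*l^3 = s"
    by auto
  define k where "k = 1/(3*l)"
  have lk: "3*l*k = 1"
    using \<open>l \<noteq> 0\<close> by (simp add: k_def)
  have ak: "a*k^3 = v"
  proof -
    have "27*s*(a*k^3) = a^2*(3*l*k)^3"
      unfolding al[symmetric] by (simp add: power_mult_distrib power2_eq_square algebra_simps)
    with lk assms have "27*s*(a*k^3) = 27*s*v"
      by simp
    with \<open>s \<noteq> 0\<close> show ?thesis
      by simp
  qed
  have "\<exists>w::'a. poly [:1, 1, 1:] w = 0"
    by (rule alg_closed_imp_poly_has_root) simp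
  then obtain w :: 'a where "poly [:1, 1, 1:] w = 0" ..
  then have w: "w^2 + w + 1 = 0"
    by (simp add: algebra_simps power2_eq_square)
  show ?thesis
    unfolding splits_into_linear_forms.simps
    apply (rule exI[of _ "a*l"], rule exI[of _ "a*k"], rule exI[of _ a])
    apply (rule exI[of _ "w*l"], rule exI[of _ "w^2*k"], rule exI[of _ 1])
    apply (rule exI[of _ "w^2*l"], rule exI[of _ "w*k"], rule exI[of _ 1])
    apply (intro conjI)
    using w lk al ak by (algebra | simp)+
qed

lemma reducibility_covariant_eq_0_imp_splits:
  fixes a :: "'a::{alg_closed_field, field_char_0}"
  assumes "a \<noteq> 0" and "4*p*r - q^2 \<noteq> 0"
    and "reducibility_covariant a (p, q, r) g = (0, 0, 0)"
  shows "splits_into_linear_forms a (p, q, r) g"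
proof -
  obtain m1 n1 m2 n2 where "quadratic_subst m1 n1 m2 n2 (0, 1, 0) = (-p/a, -q/a, -r/a)"
    using binary_quadratic_factors by blast
  then have "m1*m2 = -p/a" "m1*n2 + n1*m2 = -q/a" "n1*n2 = -r/a"
    by simp_all
  then have Q: "quadratic_subst m1 n1 m2 n2 (0, -a, 0) = (p, q, r)"
    using assms(1) by (simp add: mult.assoc)
  have "q^2 - 4*p*r = (m1*n2 - n1*m2)^2 * a^2"
    using quadratic_discriminant_subst[of m1 n1 m2 n2 "(0, -a, 0)"] unfolding Q by simp
  with assms(2) have det: "m1*n2 - n1*m2 \<noteq> 0"
    by (metis diff_0 diff_self minus_diff_eq mult_zero_left zero_power2)
  obtain s t u v where g: "cubic_subst m1 n1 m2 n2 (s, t, u, v) = g"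
    using cubic_subst_surj[OF det] by (metis prod.exhaust)
  from assms(3) have "reducibility_covariant a
      (quadratic_subst m1 n1 m2 n2 (0, -a, 0)) (cubic_subst m1 n1 m2 n2 (s, t, u, v)) = (0, 0, 0)"
    unfolding Q g .
  then have "reducibility_covariant a (0, -a, 0) (s, t, u, v) = (0, 0, 0)"
    unfolding reducibility_covariant_subst_eq_0_iff[OF det] .
  then have "t = 0 \<and> u = 0 \<and> 27*s*v = a^2"
    by (rule reducibility_covariant_normal_form[OF assms(1)])
  then have t: "t = 0" and u: "u = 0" and sv: "27*s*v = a^2"
    by blast+
  have "splits_into_linear_forms a (0, -a, 0) (s, t, u, v)"
    unfolding t u using assms(1) sv by (rule splits_into_linear_forms_normal_form)
  then have "splits_into_linear_forms a
      (quadratic_subst m1 n1 m2 n2 (0, -a, 0)) (cubic_subst m1 n1 m2 n2 (s, t, u, v))"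
    by (rule splits_into_linear_forms_subst)
  then show ?thesis
    unfolding Q g .
qed

lemma cubic_expand:
  "cubic f = [: [: [:0, 0, 0, f 1 1 1:], [:0, 0, f 1 1 2:], [:0, f 1 2 2:], [:f 2 2 2:] :],
     [: [:0, 0, f 1 1 3:], [:0, f 1 2 3:], [:f 2 2 3:] :],
     [: [:0, f 1 3 3:], [:f 2 3 3:] :],
     [: [:f 3 3 3:] :] :]"
  unfolding cubic_def var3_def const3_def by (simp add: numeral_eq_Suc algebra_simps)

lemma linear_form_product_expand:
  "linear_form a1 b1 c1 * linear_form a2 b2 c2 * linear_form a3 b3 c3 =
   [: [: [:0, 0, 0, a1*a2*a3:], [:0, 0, a1*a2*b3 + a1*b2*a3 + b1*a2*a3:],
         [:0, a1*b2*b3 + b1*a2*b3 + b1*b2*a3:], [:b1*b2*b3:] :],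
      [: [:0, 0, a1*a2*c3 + a1*c2*a3 + c1*a2*a3:],
         [:0, a1*b2*c3 + a1*c2*b3 + b1*a2*c3 + b1*c2*a3 + c1*a2*b3 + c1*b2*a3:],
         [:b1*b2*c3 + b1*c2*b3 + c1*b2*b3:] :],
      [: [:0, a1*c2*c3 + c1*a2*c3 + c1*c2*a3:], [:b1*c2*c3 + c1*b2*c3 + c1*c2*b3:] :],
      [: [:c1*c2*c3:] :] :]"
  unfolding linear_form_def var3_def const3_def by (simp add: algebra_simps)

lemma completely_reducible_cubic_iff:
  assumes "f 1 3 3 = 0" and "f 2 3 3 = 0"
  shows "completely_reducible (cubic f) \<longleftrightarrow>
    splits_into_linear_forms (f 3 3 3) (f 1 1 3, f 1 2 3, f 2 2 3) (f 1 1 1, f 1 1 2, f 1 2 2, f 2 2 2)"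
  unfolding completely_reducible_def cubic_expand linear_form_product_expand assms
  by (auto simp: eq_commute[of 0])

lemma cf3_hessian_cubic_333:
  assumes "f 1 3 3 = 0" and "f 2 3 3 = 0"
  shows "cf3 (hessian (cubic f)) 3 3 3 = 3 * f 3 3 3 * (4 * f 1 1 3 * f 2 2 3 - (f 1 2 3)^2)"
  unfolding cf3_def mcoeff_def hessian_def cubic_expand det3_def pdiff3_def const3_def assms
  by (simp add: pderiv_pCons map_poly_pCons algebra_simps power2_eq_square)

theorem lemma10p2:
  fixes f :: "nat \<Rightarrow> nat \<Rightarrow> nat \<Rightarrow> complex"
  assumes "f 3 3 3 \<noteq> 0"
    and "cf3 (hessian (cubic f)) 3 3 3 \<noteq> 0"
    and "f 1 3 3 = 0" and "f 2 3 3 = 0"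
  shows "completely_reducible (cubic f) \<longleftrightarrow>
    (f 1 1 3 * (4 * f 1 1 3 * f 2 2 3 - (f 1 2 3)\<^sup>2)
       + 3 * ((f 1 1 2)\<^sup>2 - 3 * f 1 1 1 * f 1 2 2) * f 3 3 3 = 0 \<and>
     f 1 2 3 * (4 * f 1 1 3 * f 2 2 3 - (f 1 2 3)\<^sup>2)
       + 3 * (f 1 1 2 * f 1 2 2 - 9 * f 1 1 1 * f 2 2 2) * f 3 3 3 = 0 \<and>
     f 2 2 3 * (4 * f 1 1 3 * f 2 2 3 - (f 1 2 3)\<^sup>2)
       + 3 * ((f 1 2 2)\<^sup>2 - 3 * f 1 1 2 * f 2 2 2) * f 3 3 3 = 0)"
proof -
  let ?Q = "(f 1 1 3, f 1 2 3, f 2 2 3)" and ?g = "(f 1 1 1, f 1 1 2, f 1 2 2, f 2 2 2)"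
  have "4 * f 1 1 3 * f 2 2 3 - (f 1 2 3)^2 \<noteq> 0"
    using assms(2) unfolding cf3_hessian_cubic_333[of f, OF assms(3,4)] by simp
  then have "splits_into_linear_forms (f 3 3 3) ?Q ?g \<longleftrightarrow>
      reducibility_covariant (f 3 3 3) ?Q ?g = (0, 0, 0)"
    using splits_imp_reducibility_covariant_eq_0[OF assms(1)]
      reducibility_covariant_eq_0_imp_splits[OF assms(1)] by blast
  then show ?thesis
    unfolding completely_reducible_cubic_iff[of f, OF assms(3,4)] by simp
qed

end
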